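(* Let $q$ be a prime power. For any given integers $r>0$ and $\delta>0$ there exist a constant $c_{q,\delta,r}$ and an integer $n_0$ such that for every $n>n_0$, $\mathcal{C}_q(n,n-\delta,r)=c_{q,\delta,r}$.
   Context: For integers $n\ge k\ge r\ge 0$, a $q$-covering design $\mathcal{C}_q(n,k,r)$ is a collection $\mathbb{S}$ of $k$-dimensional subspaces of $\mathbb{F}_q^n$ such that every $r$-dimensional subspace of $\mathbb{F}_q^n$ is contained in at least one element of $\mathbb{S}$. $\mathcal{C}_q(n,k,r)$ denotes the minimum number of subspaces in such a design. *)

theory Defs
  imports Main "HOL.Vector_Spaces" "HOL-Library.Function_Algebras"
begin

text \<open>The ambient space F_q^n is modelled as the functions nat => 'a that vanish
outside {0..<n}; 'a is a finite field, so q = CARD('a).\<close>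

definition vscale :: "'a::field \<Rightarrow> (nat \<Rightarrow> 'a) \<Rightarrow> (nat \<Rightarrow> 'a)" where
  "vscale c v = (\<lambda>i. c * v i)"

definition ambient :: "nat \<Rightarrow> (nat \<Rightarrow> 'a::field) set" where
  "ambient n = {v. \<forall>i\<ge>n. v i = 0}"

definition subspaces_dim :: "nat \<Rightarrow> nat \<Rightarrow> (nat \<Rightarrow> 'a::field) set set" where
  "subspaces_dim n k = {S. S \<subseteq> ambient n \<and> module.subspace vscale S \<and> vector_space.dim vscale S = k}"

definition is_q_covering :: "nat \<Rightarrow> nat \<Rightarrow> nat \<Rightarrow> (nat \<Rightarrow> 'a::field) set set \<Rightarrow> bool" where
  "is_q_covering n k r C \<longleftrightarrow> C \<subseteq> subspaces_dim n k \<and>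
     (\<forall>R \<in> subspaces_dim n r. \<exists>S \<in> C. R \<subseteq> S)"

text \<open>Minimum size of a q-covering design over the field 'a (the type is fixed by the
itself argument).\<close>
definition covering_number :: "'a::{field,finite} itself \<Rightarrow> nat \<Rightarrow> nat \<Rightarrow> nat \<Rightarrow> nat" where
  "covering_number TYPE('a) n k r =
     (LEAST m. \<exists>C :: (nat \<Rightarrow> 'a) set set. is_q_covering n k r C \<and> finite C \<and> card C = m)"

lemma vector_space_vscale: "vector_space (vscale :: 'a::field \<Rightarrow> _)"
  by unfold_locales (auto simp: vscale_def fun_eq_iff algebra_simps)

end

theory Submission
  imports Defs
begin

text \<open>
  Write \<open>f(n) = C_q(n, n - \<delta>, r)\<close>. The theorem follows from two facts:

  (1) Once \<open>n \<ge> r + \<delta>\<close>, coverings exist (all \<open>(n-\<delta>)\<close>-subspaces cover), so \<open>f(n)\<close>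
      is an honest minimum.
  (2) \<open>f(n+1) \<le> f(n)\<close>: a covering \<open>C\<close> of \<open>F_q^n\<close> lifts to a covering of \<open>F_q^(n+1)\<close>
      of the same size by \<open>S \<mapsto> S \<oplus> \<langle>e_n\<rangle>\<close>. Indeed this map is injective
      (\<open>S\<close> is recovered by intersecting with \<open>F_q^n\<close>), raises dimension by one, and
      an \<open>r\<close>-space \<open>R\<close> of \<open>F_q^(n+1)\<close> lies in \<open>S \<oplus> \<langle>e_n\<rangle>\<close> as soon as its projection
      to \<open>F_q^n\<close> (killing coordinate \<open>n\<close>) lies in \<open>S\<close>; that projection has dimension
      at most \<open>r\<close>, so it sits inside some \<open>r\<close>-space, which \<open>C\<close> covers.

  A sequence of naturals that is eventually non-increasing is eventually constant,
  which gives the theorem.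
\<close>

interpretation V: vector_space "vscale :: 'a::field \<Rightarrow> (nat \<Rightarrow> 'a) \<Rightarrow> _"
  by (rule vector_space_vscale)

section \<open>The ambient spaces\<close>

lemma finite_ambient: "finite (ambient n :: (nat \<Rightarrow> 'a::{field,finite}) set)"
proof -
  \<comment> \<open>a vector of \<open>ambient n\<close> is determined by its first \<open>n\<close> coordinates\<close>
  have "ambient n \<subseteq> (\<lambda>xs i. if i < n then xs ! i else 0) ` {xs :: 'a list. length xs = n}"
  proof
    fix v :: "nat \<Rightarrow> 'a" assume "v \<in> ambient n"
    then have "v = (\<lambda>i. if i < n then map v [0..<n] ! i else 0)"
      by (auto simp: ambient_def fun_eq_iff)
    then show "v \<in> (\<lambda>xs i. if i < n then xs ! i else 0) ` {xs. length xs = n}"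
      by (intro image_eqI[where x = "map v [0..<n]"]) simp_all
  qed
  then show ?thesis
    using finite_subset finite_list_length by blast
qed

lemma subspace_ambient: "V.subspace (ambient n :: (nat \<Rightarrow> 'a::field) set)"
  unfolding V.subspace_def ambient_def by (auto simp: vscale_def)

lemma ambient_mono: "n \<le> m \<Longrightarrow> ambient n \<subseteq> ambient m"
  by (auto simp: ambient_def)

definition evec :: "nat \<Rightarrow> nat \<Rightarrow> 'a::field" where
  "evec i = (\<lambda>j. if j = i then 1 else 0)"

lemma evec_ambient: "i < n \<Longrightarrow> evec i \<in> ambient n"
  by (auto simp: evec_def ambient_def)

lemma evec_not_ambient: "evec n \<notin> ambient n"
  by (auto simp: evec_def ambient_def)

lemma inj_evec: "inj (evec :: nat \<Rightarrow> nat \<Rightarrow> 'a::field)"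
  by (auto simp: inj_def evec_def fun_eq_iff split: if_splits)

lemma sum_fun_apply: "finite S \<Longrightarrow> (\<Sum>x\<in>S. f x) i = (\<Sum>x\<in>S. f x i)"
  by (induction S rule: finite_induct) (auto simp: plus_fun_def zero_fun_def)

text \<open>Unit vectors are independent: evaluating a vanishing linear combination at
  coordinate \<open>i\<close> isolates the coefficient of \<open>e_i\<close>.\<close>

lemma independent_evec: "V.independent (evec ` A :: (nat \<Rightarrow> 'a::field) set)"
  unfolding V.independent_explicit_finite_subsets
proof (intro allI impI ballI)
  fix S :: "(nat \<Rightarrow> 'a) set" and u v
  assume S: "S \<subseteq> evec ` A" "finite S" and zero: "(\<Sum>v\<in>S. vscale (u v) v) = 0" and "v \<in> S"
  obtain i where i: "v = evec i" using S \<open>v \<in> S\<close> by auto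
  have others: "u w * w i = 0" if w: "w \<in> S - {v}" for w
  proof -
    obtain j where "w = evec j" "j \<noteq> i" using w S i by auto
    then show ?thesis by (simp add: evec_def)
  qed
  have "0 = (\<Sum>w\<in>S. vscale (u w) w) i"
    using zero by simp
  also have "\<dots> = (\<Sum>w\<in>S. u w * w i)"
    by (simp add: sum_fun_apply S vscale_def)
  also have "\<dots> = u v * v i + (\<Sum>w\<in>S - {v}. u w * w i)"
    using sum.remove[OF S(2) \<open>v \<in> S\<close>] .
  also have "\<dots> = u v * v i"
  proof -
    have "(\<Sum>w\<in>S - {v}. u w * w i) = 0"
      by (rule sum.neutral) (use others in blast)
    then show ?thesis by simp
  qed
  also have "\<dots> = u v" using i by (simp add: evec_def)
  finally show "u v = 0" by simp
qed

section \<open>Dimension counting\<close>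

text \<open>Dimension is monotone on subsets of a finite set (the library proves this only
  for finite-dimensional vector spaces, which \<open>nat \<Rightarrow> 'a\<close> is not).\<close>

lemma dim_subset_finite:
  fixes S T :: "(nat \<Rightarrow> 'a::field) set"
  assumes "S \<subseteq> T" "finite T"
  shows "V.dim S \<le> V.dim T"
proof -
  obtain B where B: "B \<subseteq> T" "V.independent B" "T \<subseteq> V.span B" "card B = V.dim T"
    using V.basis_exists[of T] by blast
  have "finite B" using B(1) assms(2) by (rule finite_subset)
  moreover have "S \<subseteq> V.span B" using assms(1) B(3) by (rule order_trans)
  ultimately have "V.dim S \<le> card B" using V.dim_le_card by blast
  with B(4) show ?thesis by simp
qed

text \<open>\<open>F_q^n\<close> contains the \<open>n\<close> independent vectors \<open>e_0, \<dots>, e_(n-1)\<close>, so its dimension is at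
  least \<open>n\<close>; this leaves room to enlarge smaller subspaces.\<close>

lemma dim_ambient_ge: "n \<le> V.dim (ambient n :: (nat \<Rightarrow> 'a::{field,finite}) set)"
proof -
  have "n = card (evec ` {..<n} :: (nat \<Rightarrow> 'a) set)"
    using card_image[OF inj_on_subset[OF inj_evec[where 'a='a] subset_UNIV], of "{..<n}"] by simp
  also have "\<dots> = V.dim (evec ` {..<n} :: (nat \<Rightarrow> 'a) set)"
    using V.dim_eq_card_independent[OF independent_evec[where 'a='a]] by simp
  also have "\<dots> \<le> V.dim (ambient n :: (nat \<Rightarrow> 'a) set)"
    by (intro dim_subset_finite finite_ambient) (auto intro: evec_ambient)
  finally show ?thesis .
qed

lemma dim_insert_outside_span:
  fixes S :: "(nat \<Rightarrow> 'a::field) set"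
  assumes "x \<notin> V.span S" and "finite (V.span S)"
  shows "V.dim (insert x S) = V.dim S + 1"
proof -
  obtain B where B: "B \<subseteq> V.span S" "V.independent B" "V.span S \<subseteq> V.span B" "card B = V.dim S"
    using V.basis_exists[of "V.span S"] by auto
  have span_B: "V.span B = V.span S"
    by (intro V.span_eq[THEN iffD2] conjI B(1) order_trans[OF V.span_superset B(3)])
  have "finite B" using B(1) assms(2) by (rule finite_subset)
  have "x \<notin> B" using assms(1) B(1) by blast
  have "V.independent (insert x B)"
    using V.independent_insertI[OF _ B(2)] assms(1) span_B by simp
  then have "V.dim (insert x B) = card B + 1"
    using V.dim_eq_card_independent[of "insert x B"] \<open>finite B\<close> \<open>x \<notin> B\<close> by simp
  moreover have "V.span (insert x B) = V.span (insert x S)"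
    by (simp add: set_eq_iff V.span_breakdown_eq span_B)
  ultimately show ?thesis
    using B(4) V.span_eq_dim by metis
qed

text \<open>Every subspace of \<open>F_q^n\<close> of dimension at most \<open>k \<le> n\<close> lies in a \<open>k\<close>-dimensional
  one: keep adjoining vectors of \<open>F_q^n\<close> until the dimension reaches \<open>k\<close>.\<close>

lemma subspace_extends_to_dim:
  fixes T :: "(nat \<Rightarrow> 'a::{field,finite}) set"
  assumes "V.subspace T" "T \<subseteq> ambient n" "V.dim T \<le> k" "k \<le> n"
  shows "\<exists>R \<in> subspaces_dim n k. T \<subseteq> R"
  using assms
proof (induction "k - V.dim T" arbitrary: T)
  case 0
  then have "T \<in> subspaces_dim n k" by (simp add: subspaces_dim_def)
  then show ?case by blast
next
  case (Suc d)
  have finite_T: "finite T" using Suc.prems(2) finite_ambient by (rule finite_subset)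
  have span_T: "V.span T = T" using Suc.prems(1) by simp
  have "V.dim T < n" using Suc.hyps(2) Suc.prems(4) by linarith
  then have "\<not> ambient n \<subseteq> T"
    using dim_subset_finite[OF _ finite_T, of "ambient n"] dim_ambient_ge[of n]
    by (meson leD le_trans)
  then obtain x where x: "x \<in> ambient n" "x \<notin> T" by blast
  define T' where "T' = V.span (insert x T)"
  have "T' \<subseteq> ambient n"
    unfolding T'_def using V.span_minimal[OF _ subspace_ambient] x(1) Suc.prems(2) by blast
  moreover have dim_T': "V.dim T' = V.dim T + 1"
    unfolding T'_def V.dim_span
    using dim_insert_outside_span[of x T] x(2) finite_T span_T by simp
  moreover have "V.subspace T'" unfolding T'_def by simp
  moreover have "d = k - V.dim T'" "V.dim T' \<le> k"
    using dim_T' Suc.hyps(2) by linarith+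
  ultimately obtain R where "R \<in> subspaces_dim n k" "T' \<subseteq> R"
    using Suc.hyps(1)[of T'] Suc.prems(4) by blast
  moreover have "T \<subseteq> T'" unfolding T'_def using V.span_superset by blast
  ultimately show ?case by blast
qed

section \<open>Lifting subspaces from \<open>F_q^n\<close> to \<open>F_q^(n+1)\<close>\<close>

text \<open>The lift of \<open>S \<subseteq> F_q^n\<close> is \<open>S \<oplus> \<langle>e_n\<rangle>\<close>, the subspace of \<open>F_q^(n+1)\<close> of all
  vectors whose projection to \<open>F_q^n\<close> (setting coordinate \<open>n\<close> to zero) lies in \<open>S\<close>.\<close>

definition lift :: "nat \<Rightarrow> (nat \<Rightarrow> 'a::field) set \<Rightarrow> (nat \<Rightarrow> 'a) set" where
  "lift n S = V.span (insert (evec n) S)"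

text \<open>A vector belongs to the lift as soon as its projection belongs to \<open>S\<close>, because
  it differs from the projection by a multiple of \<open>e_n\<close>.\<close>

lemma mem_lift:
  fixes v :: "nat \<Rightarrow> 'a::field"
  assumes "v(n := 0) \<in> S"
  shows "v \<in> lift n S"
proof -
  have "v - vscale (v n) (evec n) = v(n := 0)"
    by (simp add: fun_eq_iff vscale_def evec_def)
  then show ?thesis
    unfolding lift_def V.span_breakdown_eq using assms V.span_base by metis
qed

text \<open>A subspace of \<open>F_q^n\<close> is recovered from its lift, so lifting is injective.\<close>

lemma lift_inter_ambient:
  fixes S :: "(nat \<Rightarrow> 'a::field) set"
  assumes "V.subspace S" "S \<subseteq> ambient n"
  shows "lift n S \<inter> ambient n = S"
proof
  show "S \<subseteq> lift n S \<inter> ambient n"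
    unfolding lift_def using assms(2) V.span_superset by blast
next
  show "lift n S \<inter> ambient n \<subseteq> S"
  proof
    fix y assume y: "y \<in> lift n S \<inter> ambient n"
    have span_S: "V.span S = S" using assms(1) by simp
    have "y \<in> V.span (insert (evec n) S)" using y unfolding lift_def by blast
    then obtain c where c: "y - vscale c (evec n) \<in> S"
      unfolding V.span_breakdown_eq span_S by blast
    then have "(y - vscale c (evec n)) n = 0" using assms(2) by (auto simp: ambient_def)
    moreover have "y n = 0" using y by (auto simp: ambient_def)
    ultimately have "c = 0" by (simp add: vscale_def evec_def)
    then have "y - vscale c (evec n) = y" by (simp add: vscale_def fun_eq_iff)
    with c show "y \<in> S" by simp
  qed
qed

text \<open>Lifting turns a \<open>k\<close>-subspace of \<open>F_q^n\<close> into a \<open>(k+1)\<close>-subspace of \<open>F_q^(n+1)\<close>,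
  since \<open>e_n \<notin> F_q^n\<close>.\<close>

lemma lift_subspaces_dim:
  fixes S :: "(nat \<Rightarrow> 'a::{field,finite}) set"
  assumes "S \<in> subspaces_dim n k"
  shows "lift n S \<in> subspaces_dim (Suc n) (Suc k)"
proof -
  have S: "S \<subseteq> ambient n" "V.subspace S" "V.dim S = k"
    using assms by (auto simp: subspaces_dim_def)
  have "insert (evec n) S \<subseteq> ambient (Suc n)"
    using evec_ambient[of n "Suc n"] S(1) ambient_mono[of n "Suc n"] by auto
  then have "lift n S \<subseteq> ambient (Suc n)"
    unfolding lift_def by (rule V.span_minimal[OF _ subspace_ambient])
  moreover have "V.dim (lift n S) = Suc k"
  proof -
    have "finite S" using S(1) finite_ambient by (rule finite_subset)
    moreover have "evec n \<notin> S" using evec_not_ambient S(1) by blast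
    moreover have span_S: "V.span S = S" using S(2) by simp
    ultimately show ?thesis
      using dim_insert_outside_span[of "evec n" S] S(3) unfolding lift_def V.dim_span span_S by simp
  qed
  ultimately show ?thesis
    unfolding subspaces_dim_def lift_def by simp
qed

lemma projection_span:
  fixes v :: "nat \<Rightarrow> 'a::field"
  assumes "v \<in> V.span B"
  shows "v(n := 0) \<in> V.span ((\<lambda>w. w(n := 0)) ` B)"
  using assms
proof (induction rule: V.span_induct_alt)
  case base
  have "(0 :: nat \<Rightarrow> 'a)(n := 0) = 0" by (simp add: fun_eq_iff)
  then show ?case using V.span_zero by metis
next
  case (step c x y)
  have eq: "(vscale c x + y)(n := 0) = vscale c (x(n := 0)) + y(n := 0)"
    by (simp add: fun_eq_iff vscale_def)
  have "x(n := 0) \<in> V.span ((\<lambda>w. w(n := 0)) ` B)"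
    using step(1) by (intro V.span_base imageI)
  then show ?case
    unfolding eq using step(2) by (intro V.span_add V.span_scale)
qed

text \<open>The projection of an \<open>r\<close>-subspace of \<open>F_q^(n+1)\<close> lies inside some \<open>r\<close>-subspace
  of \<open>F_q^n\<close>: it is spanned by the projected basis, hence has dimension at most \<open>r\<close>.\<close>

lemma projection_in_subspace:
  fixes R :: "(nat \<Rightarrow> 'a::{field,finite}) set"
  assumes "R \<in> subspaces_dim (Suc n) r" and "r \<le> n"
  shows "\<exists>R0 \<in> subspaces_dim n r. \<forall>v \<in> R. v(n := 0) \<in> R0"
proof -
  have R: "R \<subseteq> ambient (Suc n)" "V.dim R = r"
    using assms(1) by (simp_all add: subspaces_dim_def)
  obtain B where B: "B \<subseteq> R" "V.independent B" "R \<subseteq> V.span B" "card B = V.dim R"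
    using V.basis_exists[of R] by blast
  have B_ambient: "B \<subseteq> ambient (Suc n)" using B(1) R(1) by (rule order_trans)
  then have "finite B" using finite_ambient by (rule finite_subset)
  define T where "T = V.span ((\<lambda>w. w(n := 0)) ` B)"
  have "(\<lambda>w. w(n := 0)) ` B \<subseteq> ambient n"
    using B_ambient by (auto simp: ambient_def Suc_le_eq)
  then have "T \<subseteq> ambient n"
    unfolding T_def by (rule V.span_minimal[OF _ subspace_ambient])
  moreover have "V.dim T \<le> r"
  proof -
    have "V.dim T \<le> card ((\<lambda>w. w(n := 0)) ` B)"
      unfolding T_def V.dim_span using \<open>finite B\<close> by (intro V.dim_le_card' finite_imageI)
    also have "\<dots> \<le> card B" using \<open>finite B\<close> by (rule card_image_le)
    finally show ?thesis using B(4) R(2) by simp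
  qed
  moreover have "V.subspace T" unfolding T_def by simp
  ultimately obtain R0 where R0: "R0 \<in> subspaces_dim n r" "T \<subseteq> R0"
    using subspace_extends_to_dim[of T n r] assms(2) by blast
  have "v(n := 0) \<in> R0" if "v \<in> R" for v
  proof -
    have "v(n := 0) \<in> T"
      unfolding T_def using B(3) that by (intro projection_span) blast
    then show ?thesis using R0(2) by blast
  qed
  then show ?thesis using R0(1) by blast
qed

lemma covering_lift:
  fixes C :: "(nat \<Rightarrow> 'a::{field,finite}) set set"
  assumes cov: "is_q_covering n k r C" and "r \<le> n"
  shows "is_q_covering (Suc n) (Suc k) r (lift n ` C)" and "card (lift n ` C) = card C"
proof -
  have C: "S \<in> subspaces_dim n k" if "S \<in> C" for S
    using cov that by (auto simp: is_q_covering_def)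
  have "\<exists>S' \<in> lift n ` C. R \<subseteq> S'" if R: "R \<in> subspaces_dim (Suc n) r" for R
  proof -
    obtain R0 where R0: "R0 \<in> subspaces_dim n r" "\<forall>v \<in> R. v(n := 0) \<in> R0"
      using projection_in_subspace[OF R \<open>r \<le> n\<close>] by blast
    then obtain S where "S \<in> C" "R0 \<subseteq> S" using cov by (auto simp: is_q_covering_def)
    then have "R \<subseteq> lift n S" using R0(2) mem_lift by blast
    then show ?thesis using \<open>S \<in> C\<close> by blast
  qed
  then show "is_q_covering (Suc n) (Suc k) r (lift n ` C)"
    unfolding is_q_covering_def using C lift_subspaces_dim by blast
  have "inj_on (lift n) C"
  proof
    fix S1 S2 assume "S1 \<in> C" "S2 \<in> C" and eq: "lift n S1 = lift n S2"
    have "S1 = lift n S1 \<inter> ambient n"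
      using C[OF \<open>S1 \<in> C\<close>] by (intro lift_inter_ambient[symmetric]) (simp_all add: subspaces_dim_def)
    also have "\<dots> = lift n S2 \<inter> ambient n" by (simp only: eq)
    also have "\<dots> = S2"
      using C[OF \<open>S2 \<in> C\<close>] by (intro lift_inter_ambient) (simp_all add: subspaces_dim_def)
    finally show "S1 = S2" .
  qed
  then show "card (lift n ` C) = card C" by (rule card_image)
qed

section \<open>Minimal coverings\<close>

lemma finite_subspaces_dim: "finite (subspaces_dim n k :: (nat \<Rightarrow> 'a::{field,finite}) set set)"
proof -
  have "subspaces_dim n k \<subseteq> Pow (ambient n :: (nat \<Rightarrow> 'a) set)"
    by (auto simp: subspaces_dim_def)
  then show ?thesis by (rule finite_subset) (simp add: finite_ambient)
qed

text \<open>For \<open>r \<le> k \<le> n\<close> the family of all \<open>k\<close>-subspaces is a covering, so coverings exist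
  and the covering number is a genuine minimum.\<close>

lemma covering_by_all_subspaces:
  assumes "r \<le> k" "k \<le> n"
  shows "is_q_covering n k r (subspaces_dim n k :: (nat \<Rightarrow> 'a::{field,finite}) set set)"
  unfolding is_q_covering_def
proof (intro conjI subset_refl ballI)
  fix R :: "(nat \<Rightarrow> 'a) set" assume "R \<in> subspaces_dim n r"
  then show "\<exists>S \<in> subspaces_dim n k. R \<subseteq> S"
    using assms by (intro subspace_extends_to_dim) (auto simp: subspaces_dim_def)
qed

lemma covering_number_le:
  fixes C :: "(nat \<Rightarrow> 'a::{field,finite}) set set"
  assumes "is_q_covering n k r C" "finite C"
  shows "covering_number TYPE('a) n k r \<le> card C"
  unfolding covering_number_def by (rule Least_le) (use assms in blast)

lemma covering_number_attained:
  assumes "r \<le> k" "k \<le> n"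
  obtains C :: "(nat \<Rightarrow> 'a::{field,finite}) set set"
  where "is_q_covering n k r C" "finite C" "card C = covering_number TYPE('a) n k r"
proof -
  have "\<exists>m. \<exists>C :: (nat \<Rightarrow> 'a) set set. is_q_covering n k r C \<and> finite C \<and> card C = m"
    using covering_by_all_subspaces[OF assms] finite_subspaces_dim by blast
  then have "\<exists>C :: (nat \<Rightarrow> 'a) set set. is_q_covering n k r C \<and> finite C \<and> card C = covering_number TYPE('a) n k r"
    unfolding covering_number_def by (rule LeastI_ex)
  then show ?thesis using that by blast
qed

lemma covering_number_Suc_le:
  assumes "r \<le> k" "k \<le> n"
  shows "covering_number TYPE('a::{field,finite}) (Suc n) (Suc k) r \<le> covering_number TYPE('a) n k r"
proof -
  obtain C :: "(nat \<Rightarrow> 'a) set set" where C: "is_q_covering n k r C" "finite C"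
    "card C = covering_number TYPE('a) n k r"
    using covering_number_attained[OF assms] by blast
  have "r \<le> n" using assms by linarith
  have "covering_number TYPE('a) (Suc n) (Suc k) r \<le> card (lift n ` C)"
    using covering_lift(1)[OF C(1) \<open>r \<le> n\<close>] C(2) by (intro covering_number_le) simp_all
  also have "\<dots> = covering_number TYPE('a) n k r"
    using covering_lift(2)[OF C(1) \<open>r \<le> n\<close>] C(3) by simp
  finally show ?thesis .
qed

text \<open>A sequence of naturals that is non-increasing from some point on is eventually
  constant: it stays at its minimum over the tail.\<close>

lemma eventually_constant_if_eventually_antimono:
  fixes f :: "nat \<Rightarrow> nat"
  assumes antimono: "\<And>n. N \<le> n \<Longrightarrow> f (Suc n) \<le> f n"
  shows "\<exists>c n0. \<forall>n > n0. f n = c"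
proof -
  obtain m where m: "N \<le> m" "\<forall>k. N \<le> k \<longrightarrow> f m \<le> f k"
    using ex_has_least_nat[of "\<lambda>k. N \<le> k" N f] by auto
  have "f n \<le> f m" if "m \<le> n" for n
    using that
  proof (induction n rule: dec_induct)
    case (step k)
    then show ?case using antimono[of k] m(1) by simp
  qed simp
  then have "\<forall>n > m. f n = f m"
    using m by (auto intro: antisym)
  then show ?thesis by blast
qed

text \<open>For \<open>n \<ge> r + \<delta>\<close> we have \<open>n - \<delta> \<ge> r\<close>, so \<open>n \<mapsto> C_q(n, n - \<delta>, r)\<close> is non-increasing
  from \<open>r + \<delta>\<close> on.\<close>

theorem mainTheorem1:
  fixes r \<delta> :: nat
  assumes "r > 0" and "\<delta> > 0"
  shows "\<exists>c n0. \<forall>n > n0. covering_number TYPE('a::{field,finite}) n (n - \<delta>) r = c"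
proof (rule eventually_constant_if_eventually_antimono)
  fix n assume "r + \<delta> \<le> n"
  then have "Suc n - \<delta> = Suc (n - \<delta>)" and "r \<le> n - \<delta>" and "n - \<delta> \<le> n"
    by linarith+
  then show "covering_number TYPE('a) (Suc n) (Suc n - \<delta>) r \<le> covering_number TYPE('a) n (n - \<delta>) r"
    using covering_number_Suc_le[where 'a='a, OF \<open>r \<le> n - \<delta>\<close> \<open>n - \<delta> \<le> n\<close>] by simp
qed

end
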